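(* Let $\mathbf{k}$ be a field of characteristic zero and $B$ a $\mathbb{Z}$-graded $\mathbf{k}$-domain. Suppose there exist homogeneous prime elements $x_1,\dots,x_n$ ($n\ge 2$) of $B$, with $d_i=\deg x_i$, such that: the subgroup $\langle d_1,\dots,d_n\rangle$ of $\mathbb{Z}$ equals $\mathbb{Z}(B)$ and $\mathrm{type}(d_1,\dots,d_n)=0$; and for any distinct $i,j$, the elements $x_i,x_j$ are not associates in $B$. Then: (a) $\mathbb{Z}(\ker D)=\mathbb{Z}(B)$ for all $D\in\mathrm{HLND}(B)$. (b) If $B$ is finitely generated as a $\mathbf{k}$-algebra and $B$ is not rigid, then $\mathrm{HFrac}(B)$ is ruled over $\mathbf{k}$.
   Context: A $\mathbb{Z}$-graded ring is $B=\bigoplus_{i\in\mathbb{Z}}B_i$ with $B_iB_j\subseteq B_{i+j}$. A derivation $D$ is locally nilpotent if every element is killed by some power of $D$; homogeneous if $D(B_i)\subseteq B_{i+h}$ for a fixed $h$ and all $i$. $\mathrm{HLND}(B)$ is the set of homogeneous locally nilpotent derivations of $B$. $B$ is rigid if its only locally nilpotent derivation is $0$. For a graded subring $A$ (e.g. $A=\ker D$ for $D\in\mathrm{HLND}(B)$, or $A=B$), $\mathbb{Z}(A)$ is the subgroup of $\mathbb{Z}$ generated by $\{i: A\cap B_i\neq 0\}$. $\mathrm{HFrac}(B)$ is the subfield of $\mathrm{Frac}(B)$ of fractions $b/s$ with $b\in B_i$, $s\in B_i\setminus\{0\}$ for some $i$. A field extension $L/\mathbf{k}$ is ruled if $L=K^{(1)}$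 (purely transcendental of transcendence degree 1) for some intermediate field $K\supseteq \mathbf{k}$. For $S=(a_1,\dots,a_n)\in\mathbb{Z}^n$, $S_i$ denotes $S$ with the $i$-th entry removed, $J^*(S)=\{i: \gcd(S_i)\neq\gcd(S)\}$, and $\mathrm{type}(S)=|J^*(S)|$ (gcd's taken nonnegative). *)

theory Defs
  imports "HOL-Computational_Algebra.Fraction_Field"
          "HOL-Computational_Algebra.Polynomial"
          "HOL-Computational_Algebra.Factorial_Ring"
begin

definition subfield_set :: "'a::comm_ring_1 set \<Rightarrow> bool" where
  "subfield_set K \<longleftrightarrow> 0 \<in> K \<and> 1 \<in> K \<and>
     (\<forall>a\<in>K. \<forall>b\<in>K. a + b \<in> K \<and> a - b \<in> K \<and> a * b \<in> K) \<and>
     (\<forall>a\<in>K. a \<noteq> 0 \<longrightarrow> (\<exists>c\<in>K. a * c = 1))"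

(* G is a Z-grading of the K-algebra B (= the whole type 'a):
   each G i is a K-subspace, G i * G j \<subseteq> G (i+j), and B is the direct sum. *)
definition graded_algebra :: "'a::comm_ring_1 set \<Rightarrow> (int \<Rightarrow> 'a set) \<Rightarrow> bool" where
  "graded_algebra K G \<longleftrightarrow>
     (\<forall>i. 0 \<in> G i \<and> (\<forall>x\<in>G i. \<forall>y\<in>G i. x + y \<in> G i) \<and> (\<forall>c\<in>K. \<forall>x\<in>G i. c * x \<in> G i)) \<and>
     (\<forall>i j. \<forall>x\<in>G i. \<forall>y\<in>G j. x * y \<in> G (i + j)) \<and>
     (\<forall>b. \<exists>!f::int \<Rightarrow> 'a. (\<forall>i. f i \<in> G i) \<and> finite {i. f i \<noteq> 0} \<and>
            b = (\<Sum>i\<in>{i. f i \<noteq> 0}. f i))"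

definition k_derivation :: "'a::comm_ring_1 set \<Rightarrow> ('a \<Rightarrow> 'a) \<Rightarrow> bool" where
  "k_derivation K D \<longleftrightarrow>
     (\<forall>a b. D (a + b) = D a + D b) \<and>
     (\<forall>a b. D (a * b) = a * D b + b * D a) \<and>
     (\<forall>c\<in>K. \<forall>a. D (c * a) = c * D a)"

definition locally_nilpotent :: "('a::comm_ring_1 \<Rightarrow> 'a) \<Rightarrow> bool" where
  "locally_nilpotent D \<longleftrightarrow> (\<forall>b. \<exists>n. (D ^^ n) b = 0)"

definition LND :: "'a::comm_ring_1 set \<Rightarrow> ('a \<Rightarrow> 'a) set" where
  "LND K = {D. k_derivation K D \<and> locally_nilpotent D}"

definition homogeneous_map :: "(int \<Rightarrow> 'a set) \<Rightarrow> ('a \<Rightarrow> 'a) \<Rightarrow> bool" where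
  "homogeneous_map G D \<longleftrightarrow> (\<exists>h. \<forall>i. D ` G i \<subseteq> G (i + h))"

definition HLND :: "'a::comm_ring_1 set \<Rightarrow> (int \<Rightarrow> 'a set) \<Rightarrow> ('a \<Rightarrow> 'a) set" where
  "HLND K G = {D. D \<in> LND K \<and> homogeneous_map G D}"

definition rigid :: "'a::comm_ring_1 set \<Rightarrow> bool" where
  "rigid K \<longleftrightarrow> (\<forall>D\<in>LND K. D = (\<lambda>_. 0))"

definition int_subgroup_gen :: "int set \<Rightarrow> int set" where
  "int_subgroup_gen S = {x. \<exists>F c. finite F \<and> F \<subseteq> S \<and> x = (\<Sum>i\<in>F. c i * i)}"

definition degZ :: "(int \<Rightarrow> 'a::zero set) \<Rightarrow> 'a set \<Rightarrow> int set" where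
  "degZ G A = int_subgroup_gen {i. \<exists>a\<in>A \<inter> G i. a \<noteq> 0}"

definition ker :: "('a \<Rightarrow> 'b::zero) \<Rightarrow> 'a set" where
  "ker D = {b. D b = 0}"

(* type(S) for S = (a_1,...,a_n), given as a : nat \<Rightarrow> int on {1..n} *)
definition Jstar :: "nat \<Rightarrow> (nat \<Rightarrow> int) \<Rightarrow> nat set" where
  "Jstar n a = {i\<in>{1..n}. Gcd (a ` ({1..n} - {i})) \<noteq> Gcd (a ` {1..n})}"

definition type_seq :: "nat \<Rightarrow> (nat \<Rightarrow> int) \<Rightarrow> nat" where
  "type_seq n a = card (Jstar n a)"

definition alg_gen :: "'a::comm_ring_1 set \<Rightarrow> 'a set \<Rightarrow> 'a set" where
  "alg_gen K S = \<Inter>{A. K \<subseteq> A \<and> S \<subseteq> A \<and> (\<forall>x\<in>A. \<forall>y\<in>A. x + y \<in> A \<and> x * y \<in> A)}"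

definition finitely_generated_alg :: "'a::comm_ring_1 set \<Rightarrow> bool" where
  "finitely_generated_alg K \<longleftrightarrow> (\<exists>S. finite S \<and> alg_gen K S = UNIV)"

definition HFrac :: "(int \<Rightarrow> 'a::idom set) \<Rightarrow> 'a fract set" where
  "HFrac G = {Fraction_Field.Fract a s | a s k. a \<in> G k \<and> s \<in> G k \<and> s \<noteq> 0}"

definition field_gen :: "'f::field set \<Rightarrow> 'f set" where
  "field_gen S = \<Inter>{F. subfield_set F \<and> S \<subseteq> F}"

definition transcendental_over :: "'f::field set \<Rightarrow> 'f \<Rightarrow> bool" where
  "transcendental_over F t \<longleftrightarrow>
     (\<forall>p::'f poly. (\<forall>j. coeff p j \<in> F) \<and> poly p t = 0 \<longrightarrow> p = 0)"

definition ruled_over :: "'f::field set \<Rightarrow> 'f set \<Rightarrow> bool" where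
  "ruled_over L k \<longleftrightarrow> (\<exists>F t. subfield_set F \<and> k \<subseteq> F \<and> F \<subseteq> L \<and> t \<in> L \<and>
       transcendental_over F t \<and> L = field_gen (F \<union> {t}))"

end

(*
  Let D be a nonzero homogeneous locally nilpotent derivation and r a homogeneous local slice
  (D r ~= 0, D (D r) = 0).  Clearing denominators in the Dixmier map of r gives, for homogeneous b
  with D^(m+1) b = 0, an identity  m! (D r)^m b = phi + r Y  with phi in ker D homogeneous of degree
  deg b + m deg (D r).

  (a) If x is a homogeneous prime with deg x outside Z(ker D), this degree count forces phi = 0
  for b = x, so x divides r with a cofactor in the factorially closed ring ker D.  Two such primes
  would divide each other, so at most one d_i lies outside Z(ker D); type 0 says that every d_i lies
  in the subgroup generated by the others, hence none does.

  (b) If Z(ker D) = Z(B), pick u, v in ker D with deg u - deg v = deg r.  Then t = r v / u is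
  transcendental over the field F of homogeneous fractions of ker D, and induction on the D-degree,
  using the same identity, shows HFrac(B) = F(t).  A nonzero homogeneous LND exists because the
  top homogeneous component of a nonzero LND of a finitely generated graded algebra is one.
*)

theory Submission
  imports Defs
begin

section \<open>Subgroups of \<open>\<int>\<close>\<close>

interpretation intmod: module "(*) :: int \<Rightarrow> int \<Rightarrow> int"
  by unfold_locales (simp_all add: algebra_simps)

declare intmod.scale_scale [simp del] \<comment> \<open>it would loop against \<open>mult.assoc\<close>\<close>

lemma int_subgroup_gen_eq_span: "int_subgroup_gen S = intmod.span S"
  unfolding int_subgroup_gen_def intmod.span_explicit by blast

lemma Gcd_in_span:
  fixes S :: "int set"
  assumes "finite S"
  shows "Gcd S \<in> intmod.span S"
  using assms
proof (induction S rule: finite_induct)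
  case empty
  then show ?case by (simp add: intmod.span_zero)
next
  case (insert a S)
  obtain u v where uv: "u * a + v * Gcd S = gcd a (Gcd S)"
    using bezout_int by blast
  have "Gcd S \<in> intmod.span (insert a S)"
    using insert.IH intmod.span_mono[of S "insert a S"] by blast
  moreover have "a \<in> intmod.span (insert a S)"
    by (simp add: intmod.span_base)
  ultimately have "u * a + v * Gcd S \<in> intmod.span (insert a S)"
    by (intro intmod.span_add intmod.span_scale)
  then show ?case
    using uv by simp
qed

lemma type_seq_zero_in_span_delete:
  assumes "type_seq n d = 0" and i: "i \<in> {1..n}"
  shows "d i \<in> intmod.span (d ` ({1..n} - {i}))"
proof -
  have "Jstar n d = {}"
    using assms(1) unfolding type_seq_def Jstar_def by simp
  then have "Gcd (d ` ({1..n} - {i})) = Gcd (d ` {1..n})"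
    using i unfolding Jstar_def by blast
  moreover have "Gcd (d ` {1..n}) dvd d i"
    using i by simp
  ultimately obtain k where "d i = k * Gcd (d ` ({1..n} - {i}))"
    by (metis dvdE mult.commute)
  then show ?thesis
    using intmod.span_scale[OF Gcd_in_span] by simp
qed

lemma subfield_setD:
  assumes "subfield_set F"
  shows subfield_zero: "0 \<in> F" and subfield_one: "1 \<in> F"
    and subfield_add: "a \<in> F \<Longrightarrow> b \<in> F \<Longrightarrow> a + b \<in> F"
    and subfield_diff: "a \<in> F \<Longrightarrow> b \<in> F \<Longrightarrow> a - b \<in> F"
    and subfield_mult: "a \<in> F \<Longrightarrow> b \<in> F \<Longrightarrow> a * b \<in> F"
  using assms unfolding subfield_set_def by auto

lemma subfield_of_int:
  assumes "subfield_set F"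
  shows "of_int z \<in> F"
proof -
  have nat: "of_nat m \<in> F" for m
    by (induction m) (auto intro: subfield_setD[OF assms])
  show ?thesis
  proof (cases "z \<ge> 0")
    case True
    then show ?thesis using nat[of "nat z"] by simp
  next
    case False
    then have "of_int z = 0 - of_nat (nat (- z))" by simp
    then show ?thesis using nat subfield_setD[OF assms] by metis
  qed
qed

lemma subfield_inverse:
  fixes F :: "'f::field set"
  assumes "subfield_set F" "a \<in> F"
  shows "inverse a \<in> F"
proof (cases "a = 0")
  case False
  then obtain c where "c \<in> F" "a * c = 1"
    using assms unfolding subfield_set_def by blast
  then show ?thesis
    using False by (metis inverse_unique)
qed (use subfield_zero[OF assms(1)] in simp)

lemma subfield_divide:
  fixes F :: "'f::field set"
  assumes "subfield_set F" "a \<in> F" "b \<in> F"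
  shows "a / b \<in> F"
  unfolding divide_inverse using assms by (intro subfield_mult subfield_inverse)

lemma subfield_set_field_gen: "subfield_set (field_gen X)"
  unfolding subfield_set_def
proof (intro conjI ballI impI)
  fix a assume a: "a \<in> field_gen X"
  {
    fix b assume b: "b \<in> field_gen X"
    show "a + b \<in> field_gen X" "a - b \<in> field_gen X" "a * b \<in> field_gen X"
      using a b subfield_setD unfolding field_gen_def by blast+
  }
  assume "a \<noteq> 0"
  moreover have "inverse a \<in> field_gen X"
    using a subfield_inverse unfolding field_gen_def by blast
  ultimately show "\<exists>c\<in>field_gen X. a * c = 1"
    by (intro bexI[of _ "inverse a"]) simp_all
qed (auto simp: field_gen_def dest: subfield_setD)

lemma field_gen_superset: "X \<subseteq> field_gen X"
  unfolding field_gen_def by blast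

lemma field_gen_least: "subfield_set F \<Longrightarrow> X \<subseteq> F \<Longrightarrow> field_gen X \<subseteq> F"
  unfolding field_gen_def by blast

lemma additive_funpow:
  fixes f :: "'a::ab_group_add \<Rightarrow> 'a"
  assumes "additive f"
  shows "additive (f ^^ n)"
proof (induction n)
  case (Suc n)
  show ?case
    using additive.add[OF assms] additive.add[OF Suc] by (simp add: additive_def)
qed (simp add: additive_def)

lemma additive_funpow_eq_0_mono:
  fixes f :: "'a::ab_group_add \<Rightarrow> 'a"
  assumes "additive f" "(f ^^ n) x = 0" "n \<le> k"
  shows "(f ^^ k) x = 0"
proof -
  have "(f ^^ k) x = (f ^^ (k - n)) ((f ^^ n) x)"
    using assms(3) by (metis funpow_add comp_apply le_add_diff_inverse2)
  then show ?thesis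
    using assms(2) additive.zero[OF additive_funpow[OF assms(1)]] by simp
qed

lemma additive_funpow_sum_eq_0:
  fixes f :: "'a::ab_group_add \<Rightarrow> 'a"
  assumes f: "additive f" and "finite A" and nil: "\<And>a. a \<in> A \<Longrightarrow> \<exists>n. (f ^^ n) (g a) = 0"
  shows "\<exists>n. (f ^^ n) (sum g A) = 0"
  using assms(2) nil
proof (induction A rule: finite_induct)
  case empty
  show ?case
    using additive.zero[OF additive_funpow[OF f]] by simp
next
  case (insert a A)
  then obtain n m where "(f ^^ n) (g a) = 0" "(f ^^ m) (sum g A) = 0"
    by blast
  then have "(f ^^ max n m) (g a) = 0" "(f ^^ max n m) (sum g A) = 0"
    using additive_funpow_eq_0_mono[OF f] by (metis max.cobounded1 max.cobounded2)+
  then have "(f ^^ max n m) (sum g (insert a A)) = 0"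
    using insert.hyps additive.add[OF additive_funpow[OF f]] by simp
  then show ?case
    by blast
qed

lemma sum_choose_Suc_pascal:
  fixes f :: "nat \<Rightarrow> 'a::comm_semiring_1"
  shows "(\<Sum>k\<le>Suc n. of_nat (Suc n choose k) * f k)
       = (\<Sum>k\<le>n. of_nat (n choose k) * f k) + (\<Sum>k\<le>n. of_nat (n choose k) * f (Suc k))"
proof -
  have "(\<Sum>k\<le>Suc n. of_nat (Suc n choose k) * f k)
      = f 0 + (\<Sum>k\<le>n. of_nat (n choose Suc k) * f (Suc k)) + (\<Sum>k\<le>n. of_nat (n choose k) * f (Suc k))"
    by (subst sum.atMost_Suc_shift) (simp add: sum.distrib algebra_simps)
  also have "f 0 + (\<Sum>k\<le>n. of_nat (n choose Suc k) * f (Suc k)) = (\<Sum>k\<le>Suc n. of_nat (n choose k) * f k)"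
    by (simp only: sum.atMost_Suc_shift) simp
  also have "\<dots> = (\<Sum>k\<le>n. of_nat (n choose k) * f k)"
    by (simp add: binomial_eq_0)
  finally show ?thesis .
qed

lemma mem_ker [simp]: "x \<in> ker D \<longleftrightarrow> D x = 0"
  unfolding ker_def by simp

lemma alg_gen_least:
  "K \<subseteq> A \<Longrightarrow> S \<subseteq> A \<Longrightarrow> (\<forall>x\<in>A. \<forall>y\<in>A. x + y \<in> A \<and> x * y \<in> A) \<Longrightarrow> alg_gen K S \<subseteq> A"
  unfolding alg_gen_def by blast

lemma alg_gen_superset: "K \<subseteq> alg_gen K S" "S \<subseteq> alg_gen K S"
  unfolding alg_gen_def by blast+

lemma alg_gen_add: "x \<in> alg_gen K S \<Longrightarrow> y \<in> alg_gen K S \<Longrightarrow> x + y \<in> alg_gen K S"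
  and alg_gen_mult: "x \<in> alg_gen K S \<Longrightarrow> y \<in> alg_gen K S \<Longrightarrow> x * y \<in> alg_gen K S"
  unfolding alg_gen_def by blast+

lemma k_derivation_eq_0_on_generators:
  assumes D: "k_derivation K D" and S: "alg_gen K S = UNIV" and zero: "\<And>s. s \<in> S \<Longrightarrow> D s = 0"
  shows "D b = 0"
proof -
  have add: "D (x + y) = D x + D y" and mult: "D (x * y) = x * D y + y * D x"
    and scalar: "c \<in> K \<Longrightarrow> D (c * x) = c * D x" for x y c
    using D unfolding k_derivation_def by auto
  have "alg_gen K S \<subseteq> ker D"
  proof (rule alg_gen_least)
    show "K \<subseteq> ker D"
      using scalar[of _ 1] mult[of 1 1] by auto
  qed (use zero add mult in auto)
  then show ?thesis
    using S by auto
qed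

section \<open>Fractions and transcendence\<close>

abbreviation to_fract :: "'a::idom \<Rightarrow> 'a fract" where
  "to_fract a \<equiv> Fraction_Field.Fract a 1"

lemma to_fract_add: "to_fract (a + b) = to_fract a + to_fract b"
  and to_fract_mult: "to_fract (a * b) = to_fract a * to_fract b"
  by simp_all

lemma to_fract_power: "to_fract (a ^ n) = to_fract a ^ n"
  by (induction n) (simp_all add: One_fract_def to_fract_mult del: mult_fract)

lemma to_fract_sum: "to_fract (sum f A) = (\<Sum>x\<in>A. to_fract (f x))"
  by (induction A rule: infinite_finite_induct) (simp_all add: Zero_fract_def to_fract_add del: add_fract)

lemma to_fract_eq_0_iff [simp]: "to_fract a = 0 \<longleftrightarrow> a = 0"
  by (simp add: Zero_fract_def eq_fract)

lemma to_fract_0: "to_fract 0 = 0"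
  by simp

lemma Fract_decomposition:
  assumes "c * b = a + r * y" "c * p \<noteq> 0" "u \<noteq> 0" "v \<noteq> 0"
  shows "Fraction_Field.Fract b p
    = Fraction_Field.Fract a (c * p) + Fraction_Field.Fract (r * v) u * Fraction_Field.Fract (u * y) (v * (c * p))"
proof -
  have "(a * (u * (v * (c * p))) + r * v * (u * y) * (c * p)) * p = (a + r * y) * (u * v * (c * p) * p)"
    by (simp add: algebra_simps)
  also have "\<dots> = b * (c * p * (u * (v * (c * p))))"
    unfolding assms(1)[symmetric] by (simp add: algebra_simps)
  finally show ?thesis
    using assms(2-4) by (simp add: eq_fract)
qed

definition fractions :: "'a::idom set \<Rightarrow> 'a fract set" where
  "fractions R = {Fraction_Field.Fract a s | a s. a \<in> R \<and> s \<in> R \<and> s \<noteq> 0}"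

lemma fractionsI: "a \<in> R \<Longrightarrow> s \<in> R \<Longrightarrow> s \<noteq> 0 \<Longrightarrow> Fraction_Field.Fract a s \<in> fractions R"
  unfolding fractions_def by blast

lemma fractionsE:
  assumes "x \<in> fractions R"
  obtains a s where "x = Fraction_Field.Fract a s" "a \<in> R" "s \<in> R" "s \<noteq> 0"
  using assms unfolding fractions_def by blast

lemma fractions_mult:
  assumes mult: "\<And>a b. a \<in> R \<Longrightarrow> b \<in> R \<Longrightarrow> a * b \<in> R"
    and "x \<in> fractions R" "y \<in> fractions R"
  shows "x * y \<in> fractions R"
  using assms(2)
proof (rule fractionsE)
  fix a s assume x: "x = Fraction_Field.Fract a s" "a \<in> R" "s \<in> R" "s \<noteq> 0"
  obtain b t where y: "y = Fraction_Field.Fract b t" "b \<in> R" "t \<in> R" "t \<noteq> 0"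
    using assms(3) by (rule fractionsE)
  show ?thesis
    using x y by (simp add: fractionsI mult)
qed

lemma one_in_fractions: "1 \<in> R \<Longrightarrow> 1 \<in> fractions R"
  by (metis One_fract_def fractionsI one_neq_zero)

lemma fractions_common_denominator:
  fixes N :: nat
  assumes mult: "\<And>a b. a \<in> R \<Longrightarrow> b \<in> R \<Longrightarrow> a * b \<in> R"
  shows "(\<forall>j\<le>N. f j \<in> fractions R) \<Longrightarrow>
    \<exists>\<beta> \<alpha>. \<beta> \<in> R \<and> \<beta> \<noteq> 0 \<and> (\<forall>j\<le>N. \<alpha> j \<in> R \<and> to_fract \<beta> * f j = to_fract (\<alpha> j))"
proof (induction N)
  case 0
  then obtain a s where "f 0 = Fraction_Field.Fract a s" "a \<in> R" "s \<in> R" "s \<noteq> 0"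
    by (auto elim: fractionsE)
  then show ?case
    by (intro exI[of _ s] exI[of _ "\<lambda>_. a"]) (simp add: eq_fract)
next
  case (Suc N)
  then obtain \<beta> \<alpha> where IH: "\<beta> \<in> R" "\<beta> \<noteq> 0" "\<forall>j\<le>N. \<alpha> j \<in> R \<and> to_fract \<beta> * f j = to_fract (\<alpha> j)"
    by auto
  have "f (Suc N) \<in> fractions R"
    using Suc.prems by simp
  then obtain a s where new: "f (Suc N) = Fraction_Field.Fract a s" "a \<in> R" "s \<in> R" "s \<noteq> 0"
    by (rule fractionsE)
  define \<alpha>' where "\<alpha>' j = (if j \<le> N then \<alpha> j * s else a * \<beta>)" for j
  have "\<alpha>' j \<in> R \<and> to_fract (\<beta> * s) * f j = to_fract (\<alpha>' j)" if "j \<le> Suc N" for j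
  proof (cases "j \<le> N")
    case True
    have "to_fract (\<beta> * s) * f j = to_fract s * (to_fract \<beta> * f j)"
      by (simp only: to_fract_mult mult_ac)
    also have "\<dots> = to_fract (\<alpha> j * s)"
      using IH(3) True by (metis to_fract_mult mult.commute)
    finally show ?thesis
      using IH(3) True mult new(3) by (simp add: \<alpha>'_def)
  next
    case False
    then have "j = Suc N" using that by simp
    then show ?thesis
      using False new IH(1) mult by (simp add: \<alpha>'_def eq_fract algebra_simps)
  qed
  then show ?case
    using IH(1,2) new(3,4) mult by (intro exI[of _ "\<beta> * s"] exI[of _ \<alpha>']) auto
qed

lemma transcendental_over_mult:
  assumes t: "transcendental_over M t" and M1: "1 \<in> M"
    and M_mult: "\<And>a b. a \<in> M \<Longrightarrow> b \<in> M \<Longrightarrow> a * b \<in> M"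
    and FM: "F \<subseteq> M" and c: "c \<in> M" "c \<noteq> 0"
  shows "transcendental_over F (t * c)"
  unfolding transcendental_over_def
proof (intro allI impI)
  fix p assume p: "(\<forall>j. coeff p j \<in> F) \<and> poly p (t * c) = 0"
  let ?q = "pcompose p [:0, c:]"
  have "c ^ j \<in> M" for j
    by (induction j) (simp_all add: M1 M_mult c)
  then have "coeff ?q j \<in> M" for j
    using p FM unfolding coeff_pcompose_linear by (intro M_mult) auto
  moreover have "poly ?q t = 0"
    using p by (simp add: poly_pcompose algebra_simps)
  ultimately have "?q = 0"
    using t unfolding transcendental_over_def by blast
  show "p = 0"
  proof (rule poly_eqI)
    fix j
    have "c ^ j * coeff p j = 0"
      using \<open>?q = 0\<close> coeff_pcompose_linear[of p c j] by simp
    then show "coeff p j = coeff 0 j"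
      using c(2) by simp
  qed
qed

section \<open>Graded domains\<close>

locale graded_domain =
  fixes K :: "'a::idom set" and G :: "int \<Rightarrow> 'a set"
  assumes subfield: "subfield_set K" and graded: "graded_algebra K G"
begin

lemma graded_zero: "0 \<in> G i"
  and graded_add: "x \<in> G i \<Longrightarrow> y \<in> G i \<Longrightarrow> x + y \<in> G i"
  and graded_scalar: "c \<in> K \<Longrightarrow> x \<in> G i \<Longrightarrow> c * x \<in> G i"
  and graded_mult: "x \<in> G i \<Longrightarrow> y \<in> G j \<Longrightarrow> x * y \<in> G (i + j)"
  using graded unfolding graded_algebra_def by blast+

lemma graded_decomposition:
  "\<exists>!f. (\<forall>i. f i \<in> G i) \<and> finite {i. f i \<noteq> 0} \<and> b = (\<Sum>i\<in>{i. f i \<noteq> 0}. f i)"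
  using graded unfolding graded_algebra_def by blast

lemma graded_mult_eq: "x \<in> G i \<Longrightarrow> y \<in> G j \<Longrightarrow> k = i + j \<Longrightarrow> x * y \<in> G k"
  using graded_mult by blast

lemma graded_of_int_mult: "x \<in> G i \<Longrightarrow> of_int z * x \<in> G i"
  using graded_scalar subfield_of_int[OF subfield] by blast

lemma graded_uminus: "x \<in> G i \<Longrightarrow> - x \<in> G i"
  using graded_of_int_mult[of x i "-1"] by simp

lemma graded_diff: "x \<in> G i \<Longrightarrow> y \<in> G i \<Longrightarrow> x - y \<in> G i"
  using graded_add[of x i "- y"] graded_uminus by simp

lemma graded_sum: "(\<And>t. t \<in> T \<Longrightarrow> f t \<in> G i) \<Longrightarrow> sum f T \<in> G i"
  by (induction T rule: infinite_finite_induct) (auto intro: graded_zero graded_add)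

definition hcomp :: "int \<Rightarrow> 'a \<Rightarrow> 'a" where
  "hcomp i b = (THE f. (\<forall>i. f i \<in> G i) \<and> finite {i. f i \<noteq> 0} \<and>
     b = (\<Sum>i\<in>{i. f i \<noteq> 0}. f i)) i"

definition hsupp :: "'a \<Rightarrow> int set" where
  "hsupp b = {i. hcomp i b \<noteq> 0}"

lemma hcomp_decomposition:
  "(\<forall>i. hcomp i b \<in> G i) \<and> finite (hsupp b) \<and> b = (\<Sum>i\<in>hsupp b. hcomp i b)"
  using theI'[OF graded_decomposition[of b]] unfolding hsupp_def hcomp_def[abs_def] by simp

lemma hcomp_in_graded: "hcomp i b \<in> G i"
  and finite_hsupp: "finite (hsupp b)"
  and sum_hcomp: "b = (\<Sum>i\<in>hsupp b. hcomp i b)"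
  using hcomp_decomposition by blast+

lemma sum_hcomp_superset: "finite T \<Longrightarrow> hsupp b \<subseteq> T \<Longrightarrow> b = (\<Sum>i\<in>T. hcomp i b)"
  by (subst sum_hcomp) (rule sum.mono_neutral_left, auto simp: hsupp_def)

lemma hcomp_unique:
  assumes f: "\<And>i. f i \<in> G i" and T: "finite T" and zero: "\<And>i. i \<notin> T \<Longrightarrow> f i = 0"
    and b: "b = (\<Sum>i\<in>T. f i)"
  shows "hcomp i b = f i"
proof -
  have sub: "{i. f i \<noteq> 0} \<subseteq> T"
    using zero by blast
  then have "finite {i. f i \<noteq> 0}"
    using T finite_subset by blast
  moreover have "b = (\<Sum>i\<in>{i. f i \<noteq> 0}. f i)"
    unfolding b by (rule sum.mono_neutral_right[OF T sub]) auto
  ultimately have "(THE f. (\<forall>i. f i \<in> G i) \<and> finite {i. f i \<noteq> 0} \<and>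
      b = (\<Sum>i\<in>{i. f i \<noteq> 0}. f i)) = f"
    using f by (intro the1_equality[OF graded_decomposition]) blast
  then show ?thesis
    unfolding hcomp_def by simp
qed

lemma hcomp_homogeneous: "y \<in> G j \<Longrightarrow> hcomp i y = (if i = j then y else 0)"
  by (rule hcomp_unique[where T="{j}"]) (auto intro: graded_zero)

lemma hcomp_zero [simp]: "hcomp i 0 = 0"
  using hcomp_homogeneous[OF graded_zero[of 0]] by simp

lemma hcomp_add: "hcomp i (a + b) = hcomp i a + hcomp i b"
proof (rule hcomp_unique)
  show "a + b = (\<Sum>i\<in>hsupp a \<union> hsupp b. hcomp i a + hcomp i b)"
    using sum_hcomp_superset[of "hsupp a \<union> hsupp b"] finite_hsupp
    by (simp add: sum.distrib)
qed (use finite_hsupp in \<open>auto simp: hsupp_def intro: graded_add hcomp_in_graded\<close>)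

lemma additive_hcomp: "additive (hcomp i)"
  by unfold_locales (rule hcomp_add)

lemma hcomp_mult_homogeneous:
  assumes y: "y \<in> G j"
  shows "hcomp i (y * b) = y * hcomp (i - j) b"
proof -
  let ?T = "(\<lambda>k. k + j) ` hsupp b"
  have "y * b = (\<Sum>k\<in>hsupp b. y * hcomp k b)"
    by (subst sum_hcomp) (simp add: sum_distrib_left)
  also have "\<dots> = (\<Sum>k\<in>?T. y * hcomp (k - j) b)"
    by (subst sum.reindex) (auto simp: inj_on_def)
  finally have "y * b = (\<Sum>k\<in>?T. y * hcomp (k - j) b)" .
  then show ?thesis
  proof (rule hcomp_unique[rotated 3])
    fix k assume "k \<notin> ?T"
    then have "k - j \<notin> hsupp b"
      by (metis diff_add_cancel image_eqI)
    then show "y * hcomp (k - j) b = 0"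
      by (simp add: hsupp_def)
  qed (auto simp: finite_hsupp intro: graded_mult_eq[OF y hcomp_in_graded])
qed

lemma hcomp_eq_0_imp_eq_0: "(\<And>i. hcomp i b = 0) \<Longrightarrow> b = 0"
  using sum_hcomp[of b] by (simp add: hsupp_def)

lemma one_in_G0: "1 \<in> G 0"
proof -
  obtain j where "hcomp j (1::'a) \<noteq> 0"
    using hcomp_eq_0_imp_eq_0 one_neq_zero by blast
  define y where "y = hcomp j (1::'a)"
  have y: "y \<in> G j" "y \<noteq> 0"
    unfolding y_def using \<open>hcomp j 1 \<noteq> 0\<close> hcomp_in_graded by auto
  have "hcomp k (1::'a) = (if k = 0 then 1 else 0)" for k
  proof -
    have "y * hcomp k 1 = hcomp (k + j) (y * 1)"
      using hcomp_mult_homogeneous[OF y(1), of "k + j" 1] by simp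
    also have "\<dots> = (if k = 0 then y * 1 else 0)"
      using hcomp_homogeneous[OF y(1), of "k + j"] by simp
    finally show ?thesis
      using y(2) by (auto split: if_splits)
  qed
  then have "hcomp 0 (1::'a) = 1" by simp
  then show ?thesis
    using hcomp_in_graded by metis
qed

lemma graded_power: "x \<in> G i \<Longrightarrow> x ^ k \<in> G (int k * i)"
  by (induction k) (auto simp: one_in_G0 algebra_simps intro!: graded_mult_eq[of x i])

lemma subfield_subset_G0: "c \<in> K \<Longrightarrow> c \<in> G 0"
  using graded_scalar[OF _ one_in_G0] by fastforce

lemma of_int_in_G0: "of_int z \<in> G 0"
  using subfield_subset_G0 subfield_of_int[OF subfield] by blast

lemma homogeneous_cofactor:
  assumes r: "r \<in> G \<rho>" "r \<noteq> 0" and ry: "r * y \<in> G k"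
  shows "y \<in> G (k - \<rho>)"
proof -
  have "hcomp i y = 0" if "i \<noteq> k - \<rho>" for i
  proof -
    have "r * hcomp i y = hcomp (i + \<rho>) (r * y)"
      using hcomp_mult_homogeneous[OF r(1), of "i + \<rho>" y] by simp
    also have "\<dots> = 0"
      using hcomp_homogeneous[OF ry, of "i + \<rho>"] that by simp
    finally show ?thesis
      using r(2) by simp
  qed
  then have "y = (\<Sum>i\<in>{k - \<rho>}. hcomp i y)"
    by (intro sum_hcomp_superset) (auto simp: hsupp_def)
  then have "y = hcomp (k - \<rho>) y"
    by simp
  then show ?thesis
    using hcomp_in_graded by metis
qed

lemma degZ_eq_span: "degZ G A = intmod.span {i. \<exists>a\<in>A \<inter> G i. a \<noteq> 0}"
  unfolding degZ_def int_subgroup_gen_eq_span ..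

lemma degZ_mem: "y \<in> A \<Longrightarrow> y \<in> G i \<Longrightarrow> y \<noteq> 0 \<Longrightarrow> i \<in> degZ G A"
  unfolding degZ_eq_span by (rule intmod.span_base) blast

lemma subspace_degZ: "intmod.subspace (degZ G A)"
  unfolding degZ_eq_span by (rule intmod.subspace_span)

lemma degZ_mono: "A \<subseteq> B \<Longrightarrow> degZ G A \<subseteq> degZ G B"
  unfolding degZ_eq_span by (rule intmod.span_mono) blast

definition quotient_degrees :: "'a set \<Rightarrow> int set" where
  "quotient_degrees A = {k. \<exists>u v l. u \<in> A \<and> v \<in> A \<and> u \<noteq> 0 \<and> v \<noteq> 0 \<and> u \<in> G (k + l) \<and> v \<in> G l}"

lemma quotient_degreesI:
  "u \<in> A \<Longrightarrow> v \<in> A \<Longrightarrow> u \<noteq> 0 \<Longrightarrow> v \<noteq> 0 \<Longrightarrow> u \<in> G (k + l) \<Longrightarrow> v \<in> G l \<Longrightarrow> k \<in> quotient_degrees A"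
  unfolding quotient_degrees_def by blast

lemma subspace_quotient_degrees:
  assumes A1: "1 \<in> A" and A_mult: "\<And>x y. x \<in> A \<Longrightarrow> y \<in> A \<Longrightarrow> x * y \<in> A"
  shows "intmod.subspace (quotient_degrees A)"
  unfolding intmod.subspace_def
proof (intro conjI ballI allI)
  have A_power: "x ^ n \<in> A" if "x \<in> A" for x n
    using that by (induction n) (auto intro: A1 A_mult)
  show "0 \<in> quotient_degrees A"
    using A1 one_in_G0 by (intro quotient_degreesI[of 1 A 1 _ 0]) simp_all
  fix x assume "x \<in> quotient_degrees A"
  then obtain u v l where x: "u \<in> A" "v \<in> A" "u \<noteq> 0" "v \<noteq> 0" "u \<in> G (x + l)" "v \<in> G l"
    unfolding quotient_degrees_def by blast
  show "c * x \<in> quotient_degrees A" for c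
  proof (cases "c \<ge> 0")
    case True
    then show ?thesis
      using x graded_power[OF x(5), of "nat c"] graded_power[OF x(6), of "nat c"] A_power
      by (intro quotient_degreesI[of "u ^ nat c" A "v ^ nat c" _ "c * l"]) (simp_all add: algebra_simps)
  next
    case False
    then show ?thesis
      using x graded_power[OF x(6), of "nat (- c)"] graded_power[OF x(5), of "nat (- c)"] A_power
      by (intro quotient_degreesI[of "v ^ nat (- c)" A "u ^ nat (- c)" _ "- c * (x + l)"])
        (simp_all add: algebra_simps)
  qed
  fix y assume "y \<in> quotient_degrees A"
  then obtain u' v' l' where y: "u' \<in> A" "v' \<in> A" "u' \<noteq> 0" "v' \<noteq> 0" "u' \<in> G (y + l')" "v' \<in> G l'"
    unfolding quotient_degrees_def by blast
  show "x + y \<in> quotient_degrees A"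
    using x y A_mult graded_mult[OF x(5) y(5)] graded_mult[OF x(6) y(6)]
    by (intro quotient_degreesI[of "u * u'" A "v * v'" _ "l + l'"]) (simp_all add: algebra_simps)
qed

lemma degZ_quotientE:
  assumes A1: "1 \<in> A" and A_mult: "\<And>x y. x \<in> A \<Longrightarrow> y \<in> A \<Longrightarrow> x * y \<in> A"
    and k: "k \<in> degZ G A"
  obtains u v l where "u \<in> A" "v \<in> A" "u \<noteq> 0" "v \<noteq> 0" "u \<in> G (k + l)" "v \<in> G l"
proof -
  have "{i. \<exists>a\<in>A \<inter> G i. a \<noteq> 0} \<subseteq> quotient_degrees A"
    using A1 one_in_G0 by (auto intro: quotient_degreesI[of _ A 1 _ 0])
  then have "k \<in> quotient_degrees A"
    using k subspace_quotient_degrees[OF A1 A_mult] intmod.span_minimal unfolding degZ_eq_span by blast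
  then show ?thesis
    using that unfolding quotient_degrees_def by blast
qed

definition hfrac :: "'a set \<Rightarrow> 'a fract set" where
  "hfrac R = {Fraction_Field.Fract a s | a s k. a \<in> R \<inter> G k \<and> s \<in> R \<inter> G k \<and> s \<noteq> 0}"

lemma hfrac_UNIV: "hfrac UNIV = HFrac G"
  unfolding hfrac_def HFrac_def by simp

lemma hfracI:
  "a \<in> R \<Longrightarrow> s \<in> R \<Longrightarrow> a \<in> G k \<Longrightarrow> s \<in> G k \<Longrightarrow> s \<noteq> 0 \<Longrightarrow> Fraction_Field.Fract a s \<in> hfrac R"
  unfolding hfrac_def by blast

lemma hfracE:
  assumes "x \<in> hfrac R"
  obtains a s k where "x = Fraction_Field.Fract a s" "a \<in> R" "s \<in> R" "a \<in> G k" "s \<in> G k" "s \<noteq> 0"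
  using assms unfolding hfrac_def by blast

lemma hfrac_mono: "R \<subseteq> R' \<Longrightarrow> hfrac R \<subseteq> hfrac R'"
  unfolding hfrac_def by blast

lemma hfrac_subset_fractions: "hfrac R \<subseteq> fractions R"
  unfolding hfrac_def fractions_def by blast

lemma subfield_set_hfrac:
  assumes R1: "1 \<in> R" and R_add: "\<And>x y. x \<in> R \<Longrightarrow> y \<in> R \<Longrightarrow> x + y \<in> R"
    and R_mult: "\<And>x y. x \<in> R \<Longrightarrow> y \<in> R \<Longrightarrow> x * y \<in> R"
    and R_uminus: "\<And>x. x \<in> R \<Longrightarrow> - x \<in> R"
  shows "subfield_set (hfrac R)"
  unfolding subfield_set_def
proof (intro conjI ballI impI)
  have R0: "0 \<in> R"
    using R_add[OF R1 R_uminus[OF R1]] by simp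
  show "0 \<in> hfrac R"
    unfolding Zero_fract_def by (rule hfracI[OF R0 R1 graded_zero one_in_G0]) simp
  show "1 \<in> hfrac R"
    unfolding One_fract_def by (rule hfracI[OF R1 R1 one_in_G0 one_in_G0]) simp
  fix x assume "x \<in> hfrac R"
  then obtain a s k where x: "x = Fraction_Field.Fract a s" "a \<in> R" "s \<in> R" "a \<in> G k" "s \<in> G k" "s \<noteq> 0"
    by (rule hfracE)
  {
    fix y assume "y \<in> hfrac R"
    then obtain b t l where y: "y = Fraction_Field.Fract b t" "b \<in> R" "t \<in> R" "b \<in> G l" "t \<in> G l" "t \<noteq> 0"
      by (rule hfracE)
    have at: "a * t \<in> G (k + l)" and bs: "b * s \<in> G (k + l)" and st: "s * t \<in> G (k + l)"
      using x y by (auto intro: graded_mult_eq)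
    have st0: "s * t \<noteq> 0"
      using x y by simp
    have R: "a * t \<in> R" "b * s \<in> R" "s * t \<in> R"
      using x y R_mult by auto
    have "a * t - b * s \<in> R"
      using R_add[OF R(1) R_uminus[OF R(2)]] by simp
    note R = R R_add[OF R(1,2)] this
    then show "x + y \<in> hfrac R" "x - y \<in> hfrac R" "x * y \<in> hfrac R"
      unfolding x(1) y(1)
      using hfracI[OF _ R(3) graded_add[OF at bs] st st0] hfracI[OF _ R(3) graded_diff[OF at bs] st st0]
        hfracI[OF R_mult[OF x(2) y(2)] R(3) graded_mult[OF x(4) y(4)] graded_mult[OF x(5) y(5)] st0]
        x(6) y(6)
      by (simp_all add: mult.commute)
  }
  assume "x \<noteq> 0"
  then have a0: "a \<noteq> 0"
    using x by (auto simp: fract_collapse)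
  then have "x * Fraction_Field.Fract s a = 1"
    using x by (simp add: One_fract_def eq_fract)
  moreover have "Fraction_Field.Fract s a \<in> hfrac R"
    by (rule hfracI[OF x(3,2,5,4) a0])
  ultimately show "\<exists>c\<in>hfrac R. x * c = 1"
    by blast
qed

lemma alg_gen_hcomp:
  assumes "alg_gen K S = UNIV"
  shows "alg_gen K ((\<lambda>(s, i). hcomp i s) ` Sigma S hsupp) = UNIV" (is "alg_gen K ?S = _")
proof -
  have zero: "0 \<in> alg_gen K ?S"
    using alg_gen_superset(1) subfield_zero[OF subfield] by blast
  have sum: "sum f T \<in> alg_gen K ?S" if "\<And>t. t \<in> T \<Longrightarrow> f t \<in> alg_gen K ?S" for f and T :: "int set"
    using that by (induction T rule: infinite_finite_induct) (simp_all add: zero alg_gen_add)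
  have "S \<subseteq> alg_gen K ?S"
  proof
    fix s assume s: "s \<in> S"
    have "hcomp i s \<in> alg_gen K ?S" if "i \<in> hsupp s" for i
    proof -
      have "hcomp i s \<in> ?S"
        using s that by (intro image_eqI[of _ _ "(s, i)"]) auto
      then show ?thesis
        by (rule subsetD[OF alg_gen_superset(2)])
    qed
    then have "(\<Sum>i\<in>hsupp s. hcomp i s) \<in> alg_gen K ?S"
      by (rule sum)
    then show "s \<in> alg_gen K ?S"
      by (simp only: sum_hcomp[of s, symmetric])
  qed
  then have "alg_gen K S \<subseteq> alg_gen K ?S"
    by (rule alg_gen_least[OF alg_gen_superset(1)]) (simp add: alg_gen_add alg_gen_mult)
  then show ?thesis
    using assms by auto
qed

end

section \<open>Locally nilpotent derivations\<close>

locale lnd =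
  fixes K :: "'a::{idom, ring_char_0} set" and D :: "'a \<Rightarrow> 'a"
  assumes derivation: "k_derivation K D" and nilpotent: "locally_nilpotent D"
begin

lemma derivation_add: "D (a + b) = D a + D b"
  and derivation_mult: "D (a * b) = a * D b + b * D a"
  and derivation_scalar: "c \<in> K \<Longrightarrow> D (c * a) = c * D a"
  using derivation unfolding k_derivation_def by auto

sublocale der: additive D
  by unfold_locales (rule derivation_add)

sublocale funpow: additive "D ^^ n" for n
  by (rule additive_funpow) unfold_locales

declare der.zero [simp] funpow.zero [simp]

lemma derivation_one [simp]: "D 1 = 0"
  using derivation_mult[of 1 1] by simp

lemma derivation_scalar_eq_0: "c \<in> K \<Longrightarrow> D c = 0"
  using derivation_scalar[of c 1] by simp

lemma derivation_of_nat [simp]: "D (of_nat n) = 0"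
  by (induction n) (simp_all add: derivation_add)

lemma derivation_fact [simp]: "D (fact n) = 0"
  using derivation_of_nat[of "fact n"] by simp

lemma derivation_of_int [simp]: "D (of_int z) = 0"
  by (cases z) (simp_all add: der.diff der.minus)

lemma derivation_of_int_mult: "D (of_int z * a) = of_int z * D a"
  by (simp add: derivation_mult)

lemma derivation_power: "D (r ^ k) = of_nat k * r ^ (k - 1) * D r"
proof (induction k)
  case (Suc k)
  then show ?case
    by (cases k) (simp_all add: derivation_mult algebra_simps)
qed simp

lemma funpow_D_mult_ker: "D u = 0 \<Longrightarrow> (D ^^ n) (u * v) = u * (D ^^ n) v"
  by (induction n) (auto simp: derivation_mult)

lemmas funpow_D_eq_0_mono = additive_funpow_eq_0_mono[OF der.additive_axioms]

lemma funpow_D_leibniz: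
  "(D ^^ n) (u * v) = (\<Sum>k\<le>n. of_nat (n choose k) * ((D ^^ k) u * (D ^^ (n - k)) v))"
proof (induction n)
  case (Suc n)
  define f where "f k = (D ^^ k) u * (D ^^ (Suc n - k)) v" for k
  have "(D ^^ Suc n) (u * v) = (\<Sum>k\<le>n. of_nat (n choose k) * D ((D ^^ k) u * (D ^^ (n - k)) v))"
    using Suc.IH by (simp add: der.sum derivation_mult)
  also have "\<dots> = (\<Sum>k\<le>n. of_nat (n choose k) * f k) + (\<Sum>k\<le>n. of_nat (n choose k) * f (Suc k))"
    unfolding f_def by (simp add: derivation_mult Suc_diff_le algebra_simps sum.distrib)
  also have "\<dots> = (\<Sum>k\<le>Suc n. of_nat (Suc n choose k) * f k)"
    by (rule sum_choose_Suc_pascal[symmetric])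
  finally show ?case
    unfolding f_def .
qed simp

text \<open>The degree function \<open>deg\<^sub>D\<close>, except that \<open>ddeg 0 = 0\<close> instead of \<open>-\<infinity>\<close>.\<close>

definition ddeg :: "'a \<Rightarrow> nat" where
  "ddeg b = (LEAST n. (D ^^ Suc n) b = 0)"

lemma funpow_Suc_ddeg: "(D ^^ Suc (ddeg b)) b = 0"
proof -
  obtain n where "(D ^^ n) b = 0"
    using nilpotent unfolding locally_nilpotent_def by blast
  then have "(D ^^ Suc n) b = 0"
    by (rule funpow_D_eq_0_mono) simp
  then show ?thesis
    unfolding ddeg_def by (rule LeastI)
qed

lemma ddeg_le: "(D ^^ Suc k) b = 0 \<Longrightarrow> ddeg b \<le> k"
  unfolding ddeg_def by (rule Least_le)

lemma funpow_D_eq_0_iff: "(D ^^ k) b = 0 \<longleftrightarrow> b = 0 \<or> ddeg b < k"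
proof
  assume "(D ^^ k) b = 0"
  then show "b = 0 \<or> ddeg b < k"
    using ddeg_le[of "k - 1" b] by (cases k) auto
next
  assume "b = 0 \<or> ddeg b < k"
  then show "(D ^^ k) b = 0"
    using funpow_D_eq_0_mono[OF funpow_Suc_ddeg[of b], of k] by auto
qed

lemma ddeg_eqI: "(D ^^ Suc k) b = 0 \<Longrightarrow> (D ^^ k) b \<noteq> 0 \<Longrightarrow> ddeg b = k"
  using funpow_D_eq_0_iff[of k b] funpow_D_eq_0_iff[of "Suc k" b] by auto

lemma ddeg_eq_0_iff: "ddeg b = 0 \<longleftrightarrow> D b = 0"
  using funpow_D_eq_0_iff[of 1 b] ddeg_le[of 0 0] by auto

lemma ddeg_zero [simp]: "ddeg 0 = 0"
  using ddeg_eq_0_iff by simp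

lemma ddeg_mult:
  assumes "u \<noteq> 0" "v \<noteq> 0"
  shows "ddeg (u * v) = ddeg u + ddeg v"
proof (rule ddeg_eqI)
  have term_zero: "(D ^^ k) u * (D ^^ (n - k)) v = 0" if "n - k > ddeg v \<or> k > ddeg u" for k n
    using that funpow_D_eq_0_iff by auto
  show "(D ^^ Suc (ddeg u + ddeg v)) (u * v) = 0"
    unfolding funpow_D_leibniz
  proof (intro sum.neutral ballI)
    fix k
    have "Suc (ddeg u + ddeg v) - k > ddeg v \<or> k > ddeg u"
      by arith
    then show "of_nat (Suc (ddeg u + ddeg v) choose k) * ((D ^^ k) u * (D ^^ (Suc (ddeg u + ddeg v) - k)) v) = 0"
      using term_zero by simp
  qed
  have "(D ^^ (ddeg u + ddeg v)) (u * v)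
      = (\<Sum>k\<in>{ddeg u}. of_nat ((ddeg u + ddeg v) choose k) * ((D ^^ k) u * (D ^^ (ddeg u + ddeg v - k)) v))"
    unfolding funpow_D_leibniz
  proof (intro sum.mono_neutral_right ballI)
    fix k assume "k \<in> {..ddeg u + ddeg v} - {ddeg u}"
    then have "ddeg u + ddeg v - k > ddeg v \<or> k > ddeg u"
      by auto
    then show "of_nat ((ddeg u + ddeg v) choose k) * ((D ^^ k) u * (D ^^ (ddeg u + ddeg v - k)) v) = 0"
      using term_zero by simp
  qed auto
  also have "\<dots> \<noteq> 0"
    using funpow_D_eq_0_iff[of "ddeg u" u] funpow_D_eq_0_iff[of "ddeg v" v] assms by simp
  finally show "(D ^^ (ddeg u + ddeg v)) (u * v) \<noteq> 0" .
qed

lemma ker_factorially_closed: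
  assumes "D (u * v) = 0" "u * v \<noteq> 0"
  shows "D u = 0"
proof -
  have "ddeg (u * v) = 0"
    using assms(1) ddeg_eq_0_iff by blast
  then have "ddeg u = 0"
    using assms(2) ddeg_mult[of u v] by simp
  then show ?thesis
    using ddeg_eq_0_iff by blast
qed

lemma ddeg_power: "r \<noteq> 0 \<Longrightarrow> ddeg (r ^ k) = k * ddeg r"
proof (induction k)
  case 0
  show ?case
    by (simp add: ddeg_eq_0_iff)
qed (simp add: ddeg_mult)

lemma ddeg_local_slice: "D r \<noteq> 0 \<Longrightarrow> D (D r) = 0 \<Longrightarrow> ddeg r = 1"
  using ddeg_eqI[of 1 r] by simp

lemma local_slice_powers_independent:
  assumes r: "D r \<noteq> 0" "D (D r) = 0"
  shows "(\<forall>j\<le>N. D (\<alpha> j) = 0) \<Longrightarrow> (\<Sum>j\<le>N. \<alpha> j * r ^ j) = 0 \<Longrightarrow> j \<le> N \<Longrightarrow> \<alpha> j = 0"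
proof (induction N arbitrary: j)
  case (Suc N)
  have "r \<noteq> 0"
    using r by auto
  then have ddeg_power_r: "ddeg (r ^ j) = j" for j
    using ddeg_power ddeg_local_slice[OF r] by simp
  have low: "(D ^^ Suc N) (r ^ j) = 0" if "j \<le> N" for j
    using funpow_D_eq_0_iff[of "Suc N" "r ^ j"] ddeg_power_r that by simp
  have "(D ^^ Suc N) (\<Sum>j\<le>Suc N. \<alpha> j * r ^ j) = (\<Sum>j\<le>Suc N. \<alpha> j * (D ^^ Suc N) (r ^ j))"
    unfolding funpow.sum using Suc.prems(1) by (intro sum.cong refl funpow_D_mult_ker) simp
  also have "\<dots> = \<alpha> (Suc N) * (D ^^ Suc N) (r ^ Suc N)"
    using low by (simp del: funpow.simps)
  finally have "(D ^^ Suc N) (\<Sum>j\<le>Suc N. \<alpha> j * r ^ j) = \<alpha> (Suc N) * (D ^^ Suc N) (r ^ Suc N)" .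
  moreover have "(D ^^ Suc N) (r ^ Suc N) \<noteq> 0"
    using funpow_D_eq_0_iff[of "Suc N" "r ^ Suc N"] ddeg_power_r[of "Suc N"] \<open>r \<noteq> 0\<close>
    by (metis less_irrefl power_not_zero)
  ultimately have top: "\<alpha> (Suc N) = 0"
    using Suc.prems(2) by simp
  then have "(\<Sum>j\<le>N. \<alpha> j * r ^ j) = 0"
    using Suc.prems(2) by simp
  then show ?case
  proof (cases "j = Suc N")
    case False
    then have "j \<le> N"
      using Suc.prems(3) by simp
    then show ?thesis
      using Suc.IH Suc.prems(1) \<open>(\<Sum>j\<le>N. \<alpha> j * r ^ j) = 0\<close> by simp
  qed (simp add: top)
qed simp

lemma local_slice_transcendental:
  assumes r: "D r \<noteq> 0" "D (D r) = 0"
  shows "transcendental_over (fractions (ker D)) (to_fract r)"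
  unfolding transcendental_over_def
proof (intro allI impI)
  fix p assume p: "(\<forall>j. coeff p j \<in> fractions (ker D)) \<and> poly p (to_fract r) = 0"
  obtain \<beta> \<alpha> where \<beta>: "D \<beta> = 0" "\<beta> \<noteq> 0"
    and \<alpha>: "\<forall>j\<le>degree p. D (\<alpha> j) = 0 \<and> to_fract \<beta> * coeff p j = to_fract (\<alpha> j)"
    using fractions_common_denominator[of "ker D" "degree p" "coeff p"] p
    by (auto simp: derivation_mult)
  have "to_fract (\<Sum>j\<le>degree p. \<alpha> j * r ^ j) = (\<Sum>j\<le>degree p. to_fract \<beta> * coeff p j * to_fract r ^ j)"
    using \<alpha> by (simp add: to_fract_sum to_fract_mult to_fract_power del: mult_fract)
  also have "\<dots> = to_fract \<beta> * poly p (to_fract r)"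
    by (simp add: poly_altdef sum_distrib_left mult.assoc)
  finally have "(\<Sum>j\<le>degree p. \<alpha> j * r ^ j) = 0"
    using p by simp
  then have \<alpha>0: "\<alpha> j = 0" if "j \<le> degree p" for j
    using local_slice_powers_independent[OF r] \<alpha> that by blast
  have "coeff p j = 0" for j
  proof (cases "j \<le> degree p")
    case True
    then have "to_fract \<beta> * coeff p j = 0"
      using \<alpha> \<alpha>0 by (simp add: to_fract_0)
    then show ?thesis
      using \<beta>(2) by simp
  qed (simp add: coeff_eq_0)
  then show "p = 0"
    by (simp add: poly_eq_iff)
qed

lemma local_slice_multiple_transcendental:
  assumes r: "D r \<noteq> 0" "D (D r) = 0" and uv: "D u = 0" "D v = 0" "u \<noteq> 0" "v \<noteq> 0"
    and F: "F \<subseteq> fractions (ker D)"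
  shows "transcendental_over F (Fraction_Field.Fract (r * v) u)"
proof -
  have ker1: "1 \<in> ker D" and ker_mult: "\<And>x y. x \<in> ker D \<Longrightarrow> y \<in> ker D \<Longrightarrow> x * y \<in> ker D"
    by (auto simp: derivation_mult)
  have "transcendental_over F (to_fract r * Fraction_Field.Fract v u)"
  proof (rule transcendental_over_mult[OF local_slice_transcendental[OF r] one_in_fractions[OF ker1] _ F])
    show "Fraction_Field.Fract v u \<in> fractions (ker D)" "Fraction_Field.Fract v u \<noteq> 0"
      using uv by (auto simp: fractionsI eq_fract Zero_fract_def)
  qed (rule fractions_mult[OF ker_mult])
  then show ?thesis
    by simp
qed

text \<open>The Dixmier map \<open>\<pi>\<^sub>r(b) = \<Sum>\<^sub>i (-1)\<^sup>i D\<^sup>i b r\<^sup>i / (i! (D r)\<^sup>i)\<close> of a local slice \<open>r\<close>,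
  multiplied by \<open>m! (D r)\<^sup>m\<close> to clear denominators (\<open>m!/i! = \<Prod>{Suc i..m}\<close>).\<close>

definition dixmier :: "nat \<Rightarrow> 'a \<Rightarrow> 'a \<Rightarrow> 'a" where
  "dixmier m r b = (\<Sum>i\<le>m. of_int ((- 1) ^ i * int (\<Prod>{Suc i..m})) * ((D ^^ i) b * r ^ i * D r ^ (m - i)))"

lemma derivation_dixmier_term:
  assumes Dr: "D (D r) = 0" and "i \<le> m"
  shows "D ((D ^^ i) b * r ^ i * D r ^ (m - i))
    = (D ^^ Suc i) b * r ^ i * D r ^ (m - i) + of_nat i * ((D ^^ i) b * r ^ (i - 1) * D r ^ (m - (i - 1)))"
proof (cases i)
  case (Suc j)
  have "D r * D r ^ (m - Suc j) = D r ^ (m - j)"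
    using assms(2) Suc by (simp add: Suc_diff_Suc flip: power_Suc)
  moreover have "D ((D ^^ i) b * r ^ i * D r ^ (m - i))
      = (D ^^ Suc i) b * r ^ i * D r ^ (m - i) + of_nat i * ((D ^^ i) b * r ^ j * (D r * D r ^ (m - Suc j)))"
    using Suc Dr by (simp add: derivation_mult derivation_power algebra_simps del: power_Suc)
  ultimately show ?thesis
    using Suc by simp
qed (simp add: derivation_mult derivation_power Dr)

lemma derivation_dixmier:
  assumes Dr: "D (D r) = 0" and b: "(D ^^ Suc m) b = 0"
  shows "D (dixmier m r b) = 0"
proof -
  define c :: "nat \<Rightarrow> 'a" where "c i = of_int ((- 1) ^ i * int (\<Prod>{Suc i..m}))" for i
  define A where "A i = (D ^^ Suc i) b * r ^ i * D r ^ (m - i)" for i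
  have c_Suc: "c (Suc j) * of_nat (Suc j) = - c j" if "j < m" for j
  proof -
    define P where "P = \<Prod>{Suc (Suc j)..m}"
    have P: "\<Prod>{Suc j..m} = Suc j * P"
      using that unfolding P_def by (subst prod.atLeast_Suc_atMost) auto
    have "(- 1) ^ Suc j * int P * int (Suc j) = - ((- 1) ^ j * int (\<Prod>{Suc j..m}))"
      unfolding P by (simp add: algebra_simps)
    then have "of_int ((- 1) ^ Suc j * int P) * of_int (int (Suc j)) = (- c j :: 'a)"
      unfolding c_def by (metis of_int_minus of_int_mult)
    then show ?thesis
      unfolding c_def P_def by simp
  qed
  have D_term: "D ((D ^^ i) b * r ^ i * D r ^ (m - i)) = A i + of_nat i * A (i - 1)" if "i \<le> m" for i
    using derivation_dixmier_term[OF Dr that] by (cases i) (simp_all add: A_def)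
  have "D (dixmier m r b) = (\<Sum>i\<le>m. c i * D ((D ^^ i) b * r ^ i * D r ^ (m - i)))"
    unfolding dixmier_def c_def der.sum by (simp only: derivation_of_int_mult)
  also have "\<dots> = (\<Sum>i\<le>m. c i * A i) + (\<Sum>i\<le>m. c i * (of_nat i * A (i - 1)))"
    unfolding sum.distrib[symmetric] by (rule sum.cong) (simp_all add: D_term distrib_left)
  also have "(\<Sum>i\<le>m. c i * (of_nat i * A (i - 1))) = (\<Sum>j<m. - (c j * A j))"
    by (subst sum.atMost_shift) (auto intro!: sum.cong simp: c_Suc mult.assoc[symmetric] simp del: of_nat_Suc)
  also have "(\<Sum>i\<le>m. c i * A i) = (\<Sum>j<m. c j * A j) + c m * A m"
    by (simp add: lessThan_Suc_atMost[symmetric])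
  also have "A m = 0"
    unfolding A_def using b by simp
  finally show ?thesis
    by (simp add: sum_negf)
qed

lemma dvd_dixmier: "r dvd fact m * D r ^ m * b - dixmier m r b"
proof -
  have "dixmier m r b = fact m * D r ^ m * b
      + (\<Sum>j<m. of_int ((- 1) ^ Suc j * int (\<Prod>{Suc (Suc j)..m})) * ((D ^^ Suc j) b * r ^ Suc j * D r ^ (m - Suc j)))"
    unfolding dixmier_def by (subst sum.atMost_shift) (simp add: fact_prod)
  moreover have "r dvd (\<Sum>j<m. of_int ((- 1) ^ Suc j * int (\<Prod>{Suc (Suc j)..m})) * ((D ^^ Suc j) b * r ^ Suc j * D r ^ (m - Suc j)))"
    by (intro dvd_sum) simp
  ultimately show ?thesis
    by (simp add: dvd_minus_iff)
qed

lemma ddeg_dixmier_cofactor_less: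
  assumes r: "D r \<noteq> 0" "D (D r) = 0" and b: "D b \<noteq> 0"
    and Y: "fact (ddeg b) * D r ^ ddeg b * b = dixmier (ddeg b) r b + r * Y"
  shows "ddeg Y < ddeg b"
proof (cases "Y = 0")
  case True
  then show ?thesis
    using b ddeg_eq_0_iff ddeg_le[of 0 0] by fastforce
next
  case False
  let ?m = "ddeg b"
  have u: "D (fact ?m * D r ^ ?m) = 0"
    using r(2) by (simp add: derivation_mult derivation_power)
  have "(D ^^ Suc ?m) (dixmier ?m r b) = 0"
    using funpow_D_eq_0_mono[of 1 "dixmier ?m r b" "Suc ?m"] derivation_dixmier[OF r(2) funpow_Suc_ddeg] by simp
  moreover have "(D ^^ Suc ?m) (fact ?m * D r ^ ?m * b) = 0"
    using funpow_D_mult_ker[OF u, of "Suc ?m" b] funpow_Suc_ddeg[of b] by (simp del: funpow.simps)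
  ultimately have "(D ^^ Suc ?m) (r * Y) = 0"
    using Y by (metis add_diff_cancel_left' funpow.diff diff_zero)
  then have "ddeg (r * Y) \<le> ?m"
    by (rule ddeg_le)
  moreover have "ddeg (r * Y) = 1 + ddeg Y"
    using ddeg_mult[of r Y] ddeg_local_slice[OF r] r(1) False by fastforce
  ultimately show ?thesis
    by simp
qed

end

section \<open>Homogeneous components of a derivation\<close>

locale graded_lnd = graded_domain K G + lnd K D
  for K :: "'a::{idom, ring_char_0} set" and G D
begin

definition Dcomp :: "int \<Rightarrow> 'a \<Rightarrow> 'a" where
  "Dcomp p b = (\<Sum>i\<in>hsupp b. hcomp (i + p) (D (hcomp i b)))"

lemma Dcomp_superset: "finite T \<Longrightarrow> hsupp b \<subseteq> T \<Longrightarrow> Dcomp p b = (\<Sum>i\<in>T. hcomp (i + p) (D (hcomp i b)))"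
  unfolding Dcomp_def by (rule sum.mono_neutral_left) (auto simp: hsupp_def)

lemma Dcomp_homogeneous:
  assumes "y \<in> G j"
  shows "Dcomp p y = hcomp (j + p) (D y)"
proof -
  have "hsupp y \<subseteq> {j}"
    using hcomp_homogeneous[OF assms] by (auto simp: hsupp_def split: if_splits)
  then show ?thesis
    using Dcomp_superset[of "{j}" y p] hcomp_homogeneous[OF assms] by simp
qed

lemma Dcomp_in_graded: "y \<in> G i \<Longrightarrow> Dcomp p y \<in> G (i + p)"
  using Dcomp_homogeneous hcomp_in_graded by simp

lemma Dcomp_add: "Dcomp p (a + b) = Dcomp p a + Dcomp p b"
proof -
  let ?T = "hsupp a \<union> hsupp b \<union> hsupp (a + b)"
  have T: "finite ?T"
    by (simp add: finite_hsupp)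
  have "Dcomp p c = (\<Sum>i\<in>?T. hcomp (i + p) (D (hcomp i c)))" if "c \<in> {a, b, a + b}" for c
    using that by (intro Dcomp_superset[OF T]) auto
  then show ?thesis
    by (simp add: hcomp_add derivation_add sum.distrib)
qed

sublocale Dcomp: additive "Dcomp p" for p
  by unfold_locales (rule Dcomp_add)

lemma Dcomp_mult: "Dcomp p (y * z) = y * Dcomp p z + z * Dcomp p y"
proof -
  have homogeneous: "Dcomp p (y * z) = y * Dcomp p z + z * Dcomp p y" if "y \<in> G i" "z \<in> G j" for y z i j
  proof -
    have "Dcomp p (y * z) = hcomp (i + j + p) (D (y * z))"
      using Dcomp_homogeneous[OF graded_mult[OF that]] .
    also have "\<dots> = y * hcomp (j + p) (D z) + z * hcomp (i + p) (D y)"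
      by (simp add: derivation_mult hcomp_add hcomp_mult_homogeneous[OF that(1)]
          hcomp_mult_homogeneous[OF that(2)] algebra_simps)
    finally show ?thesis
      using Dcomp_homogeneous[OF that(1)] Dcomp_homogeneous[OF that(2)] by simp
  qed
  have "y * z = (\<Sum>i\<in>hsupp y. \<Sum>j\<in>hsupp z. hcomp i y * hcomp j z)"
    by (subst (1 2) sum_hcomp) (rule sum_product)
  then have "Dcomp p (y * z) = (\<Sum>i\<in>hsupp y. \<Sum>j\<in>hsupp z. hcomp i y * Dcomp p (hcomp j z) + hcomp j z * Dcomp p (hcomp i y))"
    by (simp add: Dcomp.sum homogeneous[OF hcomp_in_graded hcomp_in_graded])
  also have "\<dots> = (\<Sum>i\<in>hsupp y. hcomp i y) * Dcomp p (\<Sum>j\<in>hsupp z. hcomp j z) + (\<Sum>j\<in>hsupp z. hcomp j z) * Dcomp p (\<Sum>i\<in>hsupp y. hcomp i y)"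
    by (simp add: Dcomp.sum sum.distrib sum_distrib_left sum_distrib_right sum.swap[of _ "hsupp y" "hsupp z"])
  finally show ?thesis
    by (simp only: sum_hcomp[symmetric])
qed

lemma k_derivation_Dcomp: "k_derivation K (Dcomp p)"
  unfolding k_derivation_def
  using Dcomp_add Dcomp_mult Dcomp_homogeneous[OF subfield_subset_G0] derivation_scalar_eq_0
  by (simp add: Dcomp_mult)

lemma hcomp_D: "finite T \<Longrightarrow> hsupp y \<subseteq> T \<Longrightarrow> hcomp k (D y) = (\<Sum>i\<in>T. Dcomp (k - i) (hcomp i y))"
  by (subst sum_hcomp_superset, assumption+)
    (simp add: der.sum additive.sum[OF additive_hcomp] Dcomp_homogeneous[OF hcomp_in_graded])

lemma hcomp_D_above_top:
  assumes q: "\<And>p b. q < p \<Longrightarrow> Dcomp p b = 0" and top: "\<And>k. e < k \<Longrightarrow> hcomp k y = 0"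
  shows "(\<forall>k > e + q. hcomp k (D y) = 0) \<and> hcomp (e + q) (D y) = Dcomp q (hcomp e y)"
proof -
  let ?T = "insert e (hsupp y)"
  have T: "finite ?T"
    by (simp add: finite_hsupp)
  have le: "i \<le> e" if "i \<in> ?T" for i
    using that top[of i] by (auto simp: hsupp_def not_less[symmetric])
  have "hcomp k (D y) = 0" if "e + q < k" for k
    unfolding hcomp_D[OF T subset_insertI] using le that by (intro sum.neutral ballI q) force
  moreover have "hcomp (e + q) (D y) = Dcomp q (hcomp e y) + (\<Sum>i\<in>?T - {e}. Dcomp (e + q - i) (hcomp i y))"
    unfolding hcomp_D[OF T subset_insertI] by (subst sum.remove[OF T, of e]) simp_all
  moreover have "(\<Sum>i\<in>?T - {e}. Dcomp (e + q - i) (hcomp i y)) = 0"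
    using le by (intro sum.neutral ballI q) force
  ultimately show ?thesis
    by simp
qed

lemma hcomp_funpow_D_top:
  assumes q: "\<And>p b. q < p \<Longrightarrow> Dcomp p b = 0" and b: "b \<in> G e"
  shows "(\<forall>k > e + int n * q. hcomp k ((D ^^ n) b) = 0) \<and> hcomp (e + int n * q) ((D ^^ n) b) = (Dcomp q ^^ n) b"
proof (induction n)
  case 0
  then show ?case
    using hcomp_homogeneous[OF b] by simp
next
  case (Suc n)
  have "\<And>k. e + int n * q < k \<Longrightarrow> hcomp k ((D ^^ n) b) = 0"
    using Suc.IH by blast
  note step = hcomp_D_above_top[OF q this]
  have "e + int (Suc n) * q = (e + int n * q) + q"
    by (simp add: algebra_simps)
  then show ?case
    unfolding \<open>e + int (Suc n) * q = (e + int n * q) + q\<close> using step Suc.IH by simp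
qed

lemma locally_nilpotent_Dcomp_top:
  assumes q: "\<And>p b. q < p \<Longrightarrow> Dcomp p b = 0"
  shows "locally_nilpotent (Dcomp q)"
  unfolding locally_nilpotent_def
proof
  fix b
  have "\<exists>n. (Dcomp q ^^ n) (\<Sum>i\<in>hsupp b. hcomp i b) = 0"
  proof (rule additive_funpow_sum_eq_0[OF Dcomp.additive_axioms finite_hsupp])
    fix i
    obtain n where "(D ^^ n) (hcomp i b) = 0"
      using nilpotent unfolding locally_nilpotent_def by blast
    then show "\<exists>n. (Dcomp q ^^ n) (hcomp i b) = 0"
      using hcomp_funpow_D_top[OF q hcomp_in_graded[of i b], where n=n] by auto
  qed
  then show "\<exists>n. (Dcomp q ^^ n) b = 0"
    by (simp only: sum_hcomp[symmetric])
qed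

lemma finite_nonzero_Dcomp:
  assumes "finitely_generated_alg K"
  shows "finite {p. Dcomp p \<noteq> (\<lambda>_. 0)}"
proof -
  obtain S where S: "finite S" "alg_gen K S = UNIV"
    using assms unfolding finitely_generated_alg_def by blast
  define gens where "gens = Sigma S hsupp"
  have gens: "finite gens" "alg_gen K ((\<lambda>(s, i). hcomp i s) ` gens) = UNIV"
    unfolding gens_def using S alg_gen_hcomp by (simp_all add: finite_hsupp)
  let ?P = "\<Union>(s, i)\<in>gens. (\<lambda>k. k - i) ` hsupp (D (hcomp i s))"
  have "Dcomp p = (\<lambda>_. 0)" if p: "p \<notin> ?P" for p
  proof
    fix y
    show "Dcomp p y = 0"
    proof (rule k_derivation_eq_0_on_generators[OF k_derivation_Dcomp gens(2)])
      fix g assume "g \<in> (\<lambda>(s, i). hcomp i s) ` gens"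
      then obtain s i where si: "(s, i) \<in> gens" "g = hcomp i s"
        by (auto split: prod.splits)
      then have "i + p \<notin> hsupp (D (hcomp i s))"
        using p by force
      then show "Dcomp p g = 0"
        using si(2) Dcomp_homogeneous[OF hcomp_in_graded] by (simp add: hsupp_def)
    qed
  qed
  then have "{p. Dcomp p \<noteq> (\<lambda>_. 0)} \<subseteq> ?P"
    by blast
  moreover have "finite ?P"
    using gens(1) by (auto simp: finite_hsupp)
  ultimately show ?thesis
    by (rule finite_subset)
qed

lemma exists_nonzero_Dcomp:
  assumes "D b \<noteq> 0"
  shows "\<exists>p. Dcomp p \<noteq> (\<lambda>_. 0)"
proof (rule ccontr)
  assume "\<not> ?thesis"
  then have "hcomp k (D b) = 0" for k
    using hcomp_D[OF finite_hsupp subset_refl, of k b] by simp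
  then show False
    using assms hcomp_eq_0_imp_eq_0 by blast
qed

text \<open>The top nonzero homogeneous component of \<open>D\<close> is again locally nilpotent.\<close>

lemma exists_nonzero_HLND:
  assumes fg: "finitely_generated_alg K" and nonzero: "D b \<noteq> 0"
  shows "\<exists>E\<in>HLND K G. E \<noteq> (\<lambda>_. 0)"
proof -
  let ?P = "{p. Dcomp p \<noteq> (\<lambda>_. 0)}"
  have P: "finite ?P" "?P \<noteq> {}"
    using finite_nonzero_Dcomp[OF fg] exists_nonzero_Dcomp[OF nonzero] by auto
  define q where "q = Max ?P"
  have top: "Dcomp p y = 0" if "q < p" for p y
    using Max_ge[OF P(1), of p] that unfolding q_def by force
  have "Dcomp q \<in> HLND K G"
    unfolding HLND_def LND_def homogeneous_map_def
    using k_derivation_Dcomp locally_nilpotent_Dcomp_top[OF top] Dcomp_in_graded by blast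
  moreover have "Dcomp q \<noteq> (\<lambda>_. 0)"
    using Max_in[OF P] unfolding q_def by blast
  ultimately show ?thesis
    by blast
qed

end

lemma nonrigid_imp_exists_nonzero_HLND:
  fixes K :: "'a::{idom, ring_char_0} set"
  assumes "graded_domain K G" and fg: "finitely_generated_alg K" and nonrigid: "\<not> rigid K"
  shows "\<exists>E\<in>HLND K G. E \<noteq> (\<lambda>_. 0)"
proof -
  obtain D b where D: "D \<in> LND K" "D b \<noteq> 0"
    using nonrigid unfolding rigid_def by fastforce
  interpret graded_lnd K G D
    using assms(1) D(1) unfolding graded_domain_def by unfold_locales (auto simp: LND_def)
  show ?thesis
    using exists_nonzero_HLND[OF fg D(2)] .
qed

section \<open>Homogeneous locally nilpotent derivations\<close>

locale homogeneous_lnd = graded_lnd +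
  fixes h :: int
  assumes homogeneous: "\<And>i. D ` G i \<subseteq> G (i + h)"
begin

lemma D_in_graded: "y \<in> G i \<Longrightarrow> D y \<in> G (i + h)"
  using homogeneous by blast

lemma funpow_D_in_graded: "y \<in> G i \<Longrightarrow> (D ^^ n) y \<in> G (i + int n * h)"
proof (induction n)
  case (Suc n)
  then show ?case
    using D_in_graded[of "(D ^^ n) y" "i + int n * h"] by (simp add: algebra_simps)
qed simp

lemma exists_homogeneous_local_slice:
  assumes "D b \<noteq> 0"
  obtains r \<rho> where "r \<in> G \<rho>" "D r \<noteq> 0" "D (D r) = 0"
proof -
  have "D b = (\<Sum>i\<in>hsupp b. D (hcomp i b))"
    by (subst sum_hcomp) (simp add: der.sum)
  then obtain i where "D (hcomp i b) \<noteq> 0"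
    using assms by (metis sum.neutral)
  then obtain k where k: "ddeg (hcomp i b) = Suc k"
    using ddeg_eq_0_iff by (metis not0_implies_Suc)
  have "(D ^^ k) (hcomp i b) \<in> G (i + int k * h)"
    by (rule funpow_D_in_graded[OF hcomp_in_graded])
  moreover have "D ((D ^^ k) (hcomp i b)) \<noteq> 0" "D (D ((D ^^ k) (hcomp i b))) = 0"
    using funpow_D_eq_0_iff[of "Suc k" "hcomp i b"] funpow_D_eq_0_iff[of "Suc (Suc k)" "hcomp i b"] k
    by auto
  ultimately show ?thesis
    using that by blast
qed

lemma dixmier_in_graded:
  assumes b: "b \<in> G e" and r: "r \<in> G \<rho>"
  shows "dixmier m r b \<in> G (e + int m * (\<rho> + h))"
  unfolding dixmier_def
proof (intro graded_sum graded_of_int_mult)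
  fix i assume "i \<in> {..m}"
  then have "(e + int i * h) + int i * \<rho> + int (m - i) * (\<rho> + h) = e + int m * (\<rho> + h)"
    by (simp add: of_nat_diff algebra_simps)
  then show "(D ^^ i) b * r ^ i * D r ^ (m - i) \<in> G (e + int m * (\<rho> + h))"
    using D_in_graded[OF r] by (metis graded_mult graded_power funpow_D_in_graded[OF b] r)
qed

lemma fact_power_D_in_graded: "r \<in> G \<rho> \<Longrightarrow> fact m * D r ^ m \<in> G (int m * (\<rho> + h))"
  using graded_mult[OF of_int_in_G0[of "int (fact m)"] graded_power[OF D_in_graded]] by simp

lemma dixmier_cofactor:
  assumes b: "b \<in> G e" and r: "r \<in> G \<rho>" "r \<noteq> 0"
  obtains Y where "Y \<in> G (e + int m * (\<rho> + h) - \<rho>)" "fact m * D r ^ m * b = dixmier m r b + r * Y"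
proof -
  obtain Y where Y: "fact m * D r ^ m * b - dixmier m r b = r * Y"
    using dvd_dixmier[of r m b] unfolding dvd_def by blast
  have "fact m * D r ^ m * b \<in> G (int m * (\<rho> + h) + e)"
    using graded_mult[OF fact_power_D_in_graded[OF r(1)] b] .
  then have "r * Y \<in> G (e + int m * (\<rho> + h))"
    unfolding Y[symmetric] using dixmier_in_graded[OF b r(1)] by (intro graded_diff) (simp_all add: add.commute)
  then show ?thesis
    using that homogeneous_cofactor[OF r] Y by (metis diff_eq_eq add.commute)
qed

lemma D_neq_0_outside_degZ_ker:
  assumes "x \<in> G e" "x \<noteq> 0" "e \<notin> degZ G (ker D)"
  shows "D x \<noteq> 0"
  using assms degZ_mem[of x "ker D" e] by auto

lemma dixmier_eq_0_outside_degZ_ker: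
  assumes r: "r \<in> G \<rho>" "D r \<noteq> 0" "D (D r) = 0"
    and x: "x \<in> G e" "e \<notin> degZ G (ker D)"
  shows "dixmier (ddeg x) r x = 0"
proof -
  let ?m = "ddeg x" and ?Z = "degZ G (ker D)"
  have "\<rho> + h \<in> ?Z"
    using degZ_mem[of "D r" "ker D"] D_in_graded[OF r(1)] r(2,3) by simp
  then have "int ?m * (\<rho> + h) \<in> ?Z"
    unfolding degZ_eq_span by (rule intmod.span_scale)
  then have "e + int ?m * (\<rho> + h) \<notin> ?Z"
    using x(2) intmod.span_diff unfolding degZ_eq_span by fastforce
  then show ?thesis
    using degZ_mem[of "dixmier ?m r x" "ker D"] dixmier_in_graded[OF x(1) r(1)]
      derivation_dixmier[OF r(3) funpow_Suc_ddeg] by auto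
qed

lemma prime_dvd_local_slice:
  assumes r: "r \<in> G \<rho>" "D r \<noteq> 0" "D (D r) = 0"
    and x: "x \<in> G e" "prime_elem x" "e \<notin> degZ G (ker D)"
  obtains u where "r = x * u" "D u = 0"
proof -
  let ?m = "ddeg x"
  have x0: "x \<noteq> 0"
    using x(2) by auto
  obtain Y where Y: "fact ?m * D r ^ ?m * x = r * Y"
    using dvd_dixmier[of r ?m x] dixmier_eq_0_outside_degZ_ker[OF r x(1,3)] by (auto elim: dvdE)
  have "\<not> x dvd Y"
  proof
    assume "x dvd Y"
    then obtain w where "Y = x * w"
      by (elim dvdE)
    then have "fact ?m * D r ^ ?m = r * w"
      using Y x0 by (simp add: algebra_simps)
    moreover have "D (fact ?m * D r ^ ?m) = 0" "fact ?m * D r ^ ?m \<noteq> 0"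
      using r(2,3) by (simp_all add: derivation_mult derivation_power)
    ultimately show False
      using ker_factorially_closed[of r w] r(2) by simp
  qed
  then obtain u where u: "r = x * u"
    using prime_elem_dvd_mult_iff[OF x(2)] Y by (metis dvdE dvd_triv_right)
  have "ddeg x \<noteq> 0"
    using D_neq_0_outside_degZ_ker[OF x(1) x0 x(3)] ddeg_eq_0_iff by blast
  moreover have "ddeg x + ddeg u = 1"
    using ddeg_mult[of x u] ddeg_local_slice[OF r(2,3)] u r(2) by fastforce
  ultimately have "ddeg u = 0"
    by simp
  then show ?thesis
    using that u ddeg_eq_0_iff by blast
qed

lemma primes_outside_degZ_ker_dvd:
  assumes r: "r \<in> G \<rho>" "D r \<noteq> 0" "D (D r) = 0"
    and x: "x \<in> G e" "prime_elem x" "e \<notin> degZ G (ker D)"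
    and y: "y \<in> G e'" "prime_elem y" "e' \<notin> degZ G (ker D)"
  shows "y dvd x"
proof -
  obtain u where u: "r = x * u" "D u = 0"
    using prime_dvd_local_slice[OF r x] .
  obtain w where "r = y * w"
    using prime_dvd_local_slice[OF r y] .
  then have "y dvd x \<or> y dvd u"
    using u(1) prime_elem_dvd_mult_iff[OF y(2)] by (metis dvd_triv_left)
  moreover have "\<not> y dvd u"
  proof
    assume "y dvd u"
    then obtain w' where "u = y * w'"
      by (elim dvdE)
    moreover have "u \<noteq> 0"
      using u(1) r(2) by auto
    ultimately have "D y = 0"
      using ker_factorially_closed[of y w'] u(2) by simp
    then show False
      using D_neq_0_outside_degZ_ker[OF y(1) _ y(3)] y(2) by auto
  qed
  ultimately show ?thesis
    by blast
qed

lemma degZ_ker_eq_degZ: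
  assumes xprime: "\<forall>i\<in>{1..n}. prime_elem (x i)"
    and xdeg: "\<forall>i\<in>{1..n}. x i \<in> G (d i)"
    and gen: "int_subgroup_gen (d ` {1..n}) = degZ G UNIV"
    and type0: "type_seq n d = 0"
    and nonassoc: "\<forall>i\<in>{1..n}. \<forall>j\<in>{1..n}. i \<noteq> j \<longrightarrow> \<not> (x i dvd x j \<and> x j dvd x i)"
  shows "degZ G (ker D) = degZ G UNIV"
proof (cases "\<exists>b. D b \<noteq> 0")
  case False
  then show ?thesis
    by (simp add: ker_def)
next
  case True
  then obtain r \<rho> where r: "r \<in> G \<rho>" "D r \<noteq> 0" "D (D r) = 0"
    using exists_homogeneous_local_slice by metis
  let ?Z = "degZ G (ker D)"
  have unique: "i = j" if "i \<in> {1..n}" "j \<in> {1..n}" "d i \<notin> ?Z" "d j \<notin> ?Z" for i j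
    using primes_outside_degZ_ker_dvd[OF r, of "x i" "d i" "x j" "d j"]
      primes_outside_degZ_ker_dvd[OF r, of "x j" "d j" "x i" "d i"] nonassoc xprime xdeg that
    by blast
  have "d i \<in> ?Z" if i: "i \<in> {1..n}" for i
  proof (rule ccontr)
    assume "d i \<notin> ?Z"
    then have "d ` ({1..n} - {i}) \<subseteq> ?Z"
      using unique[OF i] by blast
    then have "intmod.span (d ` ({1..n} - {i})) \<subseteq> ?Z"
      using subspace_degZ by (rule intmod.span_minimal)
    then show False
      using type_seq_zero_in_span_delete[OF type0 i] \<open>d i \<notin> ?Z\<close> by blast
  qed
  then have "intmod.span (d ` {1..n}) \<subseteq> ?Z"
    using subspace_degZ by (intro intmod.span_minimal) blast+
  then have "degZ G UNIV \<subseteq> ?Z"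
    using gen by (simp add: int_subgroup_gen_eq_span)
  then show ?thesis
    using degZ_mono[of "ker D" UNIV] by blast
qed

text \<open>Induction on \<open>ddeg b\<close>: the cleared Dixmier map splits \<open>b/p\<close> into a fraction of kernel
  elements plus \<open>t\<close> times a fraction whose numerator has smaller \<open>ddeg\<close>.\<close>

lemma homogeneous_fraction_in_subfield:
  assumes r: "r \<in> G \<rho>" "D r \<noteq> 0" "D (D r) = 0"
    and u: "u \<in> G (\<rho> + l)" "D u = 0" "u \<noteq> 0" and v: "v \<in> G l" "D v = 0" "v \<noteq> 0"
    and S: "subfield_set S" "hfrac (ker D) \<subseteq> S" "Fraction_Field.Fract (r * v) u \<in> S"
    and b: "b \<in> G e" and p: "p \<in> G e" "D p = 0" "p \<noteq> 0"
  shows "Fraction_Field.Fract b p \<in> S"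
  using b p
proof (induction "ddeg b" arbitrary: b e p rule: less_induct)
  case less
  show ?case
  proof (cases "D b = 0")
    case True
    then have "Fraction_Field.Fract b p \<in> hfrac (ker D)"
      using less.prems by (intro hfracI) auto
    then show ?thesis
      using S(2) by blast
  next
    case False
    let ?m = "ddeg b" and ?k = "e + int (ddeg b) * (\<rho> + h)"
    have r0: "r \<noteq> 0"
      using r(2) by auto
    obtain Y where Y: "Y \<in> G (?k - \<rho>)" "fact ?m * D r ^ ?m * b = dixmier ?m r b + r * Y"
      using dixmier_cofactor[OF less.prems(1) r(1) r0] .
    define P where "P = fact ?m * D r ^ ?m * p"
    have P: "P \<in> G ?k" "D P = 0" "P \<noteq> 0"
      using graded_mult[OF fact_power_D_in_graded[OF r(1)] less.prems(2)] less.prems r(2,3)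
      by (simp_all add: P_def add.commute derivation_mult derivation_power)
    have "Fraction_Field.Fract (dixmier ?m r b) P \<in> hfrac (ker D)"
      by (rule hfracI[OF _ _ dixmier_in_graded[OF less.prems(1) r(1)] P(1) P(3)])
        (simp_all add: derivation_dixmier[OF r(3) funpow_Suc_ddeg] P(2))
    then have "Fraction_Field.Fract (dixmier ?m r b) P \<in> S"
      using S(2) by blast
    moreover have "Fraction_Field.Fract (u * Y) (v * P) \<in> S"
    proof (cases "Y = 0")
      case True
      then show ?thesis
        using subfield_zero[OF S(1)] by (simp add: fract_collapse)
    next
      case False
      have "ddeg (u * Y) = ddeg Y"
        using ddeg_mult[OF u(3) False] u(2) ddeg_eq_0_iff by simp
      moreover have "ddeg Y < ?m"
        using ddeg_dixmier_cofactor_less[OF r(2,3) \<open>D b \<noteq> 0\<close> Y(2)] .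
      moreover have "u * Y \<in> G (l + ?k)" "v * P \<in> G (l + ?k)"
        using graded_mult[OF u(1) Y(1)] graded_mult[OF v(1) P(1)] by (simp_all add: algebra_simps)
      moreover have "D (v * P) = 0" "v * P \<noteq> 0"
        using v(2,3) P(2,3) by (simp_all add: derivation_mult)
      ultimately show ?thesis
        using less.hyps by metis
    qed
    moreover have "Fraction_Field.Fract b p
        = Fraction_Field.Fract (dixmier ?m r b) P + Fraction_Field.Fract (r * v) u * Fraction_Field.Fract (u * Y) (v * P)"
      unfolding P_def using P(3) u(3) v(3) by (intro Fract_decomposition[OF Y(2)]) (simp_all add: P_def)
    ultimately show ?thesis
      using S(1) S(3) by (metis subfield_add subfield_mult)
  qed
qed

lemma HFrac_subset_subfield:
  assumes Z: "degZ G (ker D) = degZ G UNIV" and r: "r \<in> G \<rho>" "D r \<noteq> 0" "D (D r) = 0"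
    and u: "u \<in> G (\<rho> + l)" "D u = 0" "u \<noteq> 0" and v: "v \<in> G l" "D v = 0" "v \<noteq> 0"
    and S: "subfield_set S" "hfrac (ker D) \<subseteq> S" "Fraction_Field.Fract (r * v) u \<in> S"
  shows "HFrac G \<subseteq> S"
proof
  have ker1: "1 \<in> ker D" and ker_mult: "\<And>x y. x \<in> ker D \<Longrightarrow> y \<in> ker D \<Longrightarrow> x * y \<in> ker D"
    by (auto simp: derivation_mult)
  fix x assume "x \<in> HFrac G"
  then obtain b s k where x: "x = Fraction_Field.Fract b s" "b \<in> G k" "s \<in> G k" "s \<noteq> 0"
    unfolding hfrac_UNIV[symmetric] by (rule hfracE) blast
  have "k \<in> degZ G (ker D)"
    unfolding Z using degZ_mem[of s UNIV k] x by simp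
  then obtain P Q l' where PQ: "D P = 0" "D Q = 0" "P \<noteq> 0" "Q \<noteq> 0" "P \<in> G (k + l')" "Q \<in> G l'"
    using degZ_quotientE[OF ker1 ker_mult] by (metis mem_ker)
  have parts: "Fraction_Field.Fract (b * Q) P \<in> S" "Fraction_Field.Fract (s * Q) P \<in> S"
    using homogeneous_fraction_in_subfield[OF r u v S] PQ graded_mult[OF x(2) PQ(6)] graded_mult[OF x(3) PQ(6)]
    by auto
  have "x = Fraction_Field.Fract (b * Q) P / Fraction_Field.Fract (s * Q) P"
    unfolding x(1) using PQ(3,4) x(4) by (simp add: eq_fract algebra_simps)
  then show "x \<in> S"
    using subfield_divide[OF S(1) parts] by simp
qed

lemma HFrac_ruled:
  assumes Z: "degZ G (ker D) = degZ G UNIV" and nonzero: "D b \<noteq> 0"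
  shows "ruled_over (HFrac G) (to_fract ` K)"
proof -
  obtain r \<rho> where r: "r \<in> G \<rho>" "D r \<noteq> 0" "D (D r) = 0"
    using exists_homogeneous_local_slice[OF nonzero] by metis
  have ker1: "1 \<in> ker D" and ker_mult: "\<And>x y. x \<in> ker D \<Longrightarrow> y \<in> ker D \<Longrightarrow> x * y \<in> ker D"
    by (auto simp: derivation_mult)
  have "r \<noteq> 0"
    using r(2) by auto
  then have "\<rho> \<in> degZ G (ker D)"
    unfolding Z using degZ_mem[of r UNIV \<rho>] r(1) by simp
  then obtain u v l where uv: "u \<in> ker D" "v \<in> ker D" "u \<noteq> 0" "v \<noteq> 0" "u \<in> G (\<rho> + l)" "v \<in> G l"
    using degZ_quotientE[OF ker1 ker_mult] by metis
  define F where "F = hfrac (ker D)"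
  define t where "t = Fraction_Field.Fract (r * v) u"
  have F: "subfield_set F"
    unfolding F_def by (rule subfield_set_hfrac) (auto simp: derivation_mult derivation_add der.minus)
  have L: "subfield_set (HFrac G)"
    unfolding hfrac_UNIV[symmetric] by (rule subfield_set_hfrac) auto
  have KF: "to_fract ` K \<subseteq> F"
    unfolding F_def using subfield_subset_G0 one_in_G0 derivation_scalar_eq_0 by (auto intro!: hfracI)
  have FL: "F \<subseteq> HFrac G"
    unfolding F_def hfrac_UNIV[symmetric] by (rule hfrac_mono) simp
  have tL: "t \<in> HFrac G"
    unfolding t_def hfrac_UNIV[symmetric] using graded_mult[OF r(1) uv(6)] uv by (auto intro!: hfracI)
  have t: "transcendental_over F t"
    unfolding t_def F_def using r(2,3) uv(1-4) hfrac_subset_fractions by (intro local_slice_multiple_transcendental) auto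
  have "HFrac G \<subseteq> field_gen (F \<union> {t})"
    using field_gen_superset[of "F \<union> {t}"] unfolding F_def t_def
    by (intro HFrac_subset_subfield[OF Z r uv(5) _ uv(3) uv(6) _ uv(4) subfield_set_field_gen]) (use uv in auto)
  moreover have "field_gen (F \<union> {t}) \<subseteq> HFrac G"
    using FL tL by (intro field_gen_least[OF L]) blast
  ultimately have "HFrac G = field_gen (F \<union> {t})"
    by (rule subset_antisym)
  then show ?thesis
    unfolding ruled_over_def using F KF FL tL t by blast
qed

end

lemma HLND_imp_homogeneous_lnd:
  assumes "graded_domain K G" "D \<in> HLND K G"
  obtains h where "homogeneous_lnd K G D h"
proof -
  obtain h where "k_derivation K D" "locally_nilpotent D" "\<And>i. D ` G i \<subseteq> G (i + h)"
    using assms(2) unfolding HLND_def LND_def homogeneous_map_def by blast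
  then have "homogeneous_lnd K G D h"
    using assms(1) unfolding graded_domain_def by unfold_locales blast+
  then show ?thesis
    using that by blast
qed

theorem proposition3p10:
  fixes K :: "'b::{idom, ring_char_0} set"
    and G :: "int \<Rightarrow> 'b set"
    and n :: nat and x :: "nat \<Rightarrow> 'b" and d :: "nat \<Rightarrow> int"
  assumes K: "subfield_set K"
    and G: "graded_algebra K G"
    and n: "n \<ge> 2"
    and xprime: "\<forall>i\<in>{1..n}. prime_elem (x i)"
    and xdeg: "\<forall>i\<in>{1..n}. x i \<in> G (d i)"
    and gen: "int_subgroup_gen (d ` {1..n}) = degZ G UNIV"
    and type0: "type_seq n d = 0"
    and nonassoc: "\<forall>i\<in>{1..n}. \<forall>j\<in>{1..n}. i \<noteq> j \<longrightarrow> \<not> (x i dvd x j \<and> x j dvd x i)"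
  shows "(\<forall>D\<in>HLND K G. degZ G (ker D) = degZ G UNIV)
     \<and> (finitely_generated_alg K \<and> \<not> rigid K \<longrightarrow>
          ruled_over (HFrac G) ((\<lambda>c. Fraction_Field.Fract c 1) ` K))"
proof -
  interpret graded_domain K G
    using K G by unfold_locales
  have part_a: "degZ G (ker D) = degZ G UNIV" if D: "D \<in> HLND K G" for D
  proof -
    obtain h where "homogeneous_lnd K G D h"
      using HLND_imp_homogeneous_lnd[OF graded_domain_axioms D] .
    then show ?thesis
      using homogeneous_lnd.degZ_ker_eq_degZ[OF _ xprime xdeg gen type0 nonassoc] by blast
  qed
  have "ruled_over (HFrac G) (to_fract ` K)" if fg: "finitely_generated_alg K" "\<not> rigid K"
  proof -
    obtain E b where E: "E \<in> HLND K G" "E b \<noteq> 0"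
      using nonrigid_imp_exists_nonzero_HLND[OF graded_domain_axioms fg] by fastforce
    obtain h where "homogeneous_lnd K G E h"
      using HLND_imp_homogeneous_lnd[OF graded_domain_axioms E(1)] .
    then show ?thesis
      using homogeneous_lnd.HFrac_ruled part_a[OF E(1)] E(2) by blast
  qed
  with part_a show ?thesis
    by blast
qed

end
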